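(* For every $n\ge 1$ and $z\in\mathbb{C}\setminus\{a,-a\}$, $$P_n'(z)=\beta_n(a)A_n(z)P_{n-1}(z)-B_n(z)P_n(z),$$ where $$A_n(z)=2+\frac{aR_n(a)}{z^2-a^2},\qquad B_n(z)=\frac{z\,r_n(a)}{z^2-a^2}.$$ Here $R_n(a)=\frac{2e^{-a^2}P_n(a)^2}{h_n(a)}$ and $r_n(a)=\frac{2e^{-a^2}P_n(a)P_{n-1}(a)}{h_{n-1}(a)}$.
   Context: Fix $a>0$. Let $w(x)=e^{-x^2}\chi_{\mathbb{R}\setminus(-a,a)}(x)$, so that $w(x)=e^{-x^2}$ for $|x|\ge a$ and $w(x)=0$ for $|x|<a$. Let $P_n(x)=P_n(x;a)$, $n=0,1,2,\dots$, be the monic polynomials of degree $n$ orthogonal with respect to $w$: $$\int_{\mathbb{R}}P_j(x)P_k(x)w(x)\,dx=h_j(a)\delta_{jk}.$$ Since $w$ is even, these polynomials satisfy $xP_n(x)=P_{n+1}(x)+\beta_n(a)P_{n-1}(x)$ for $n\ge1$, with $\beta_n(a)=h_n(a)/h_{n-1}(a)$. The derivative $'$ is taken in $z$. *)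

theory Defs
  imports "HOL-Analysis.Analysis" "HOL-Computational_Algebra.Polynomial"
begin

definition wgt :: "real \<Rightarrow> real \<Rightarrow> real" where
  "wgt a x = (if \<bar>x\<bar> \<ge> a then exp (- (x^2)) else 0)"

definition OP :: "real \<Rightarrow> nat \<Rightarrow> real poly" where
  "OP a = (THE P. (\<forall>n. degree (P n) = n \<and> lead_coeff (P n) = 1) \<and>
      (\<forall>j k. j \<noteq> k \<longrightarrow>
         (LINT x|lborel. poly (P j) x * poly (P k) x * wgt a x) = 0))"

definition hn :: "real \<Rightarrow> nat \<Rightarrow> real" where
  "hn a n = (LINT x|lborel. (poly (OP a n) x)^2 * wgt a x)"

definition beta :: "real \<Rightarrow> nat \<Rightarrow> real" where
  "beta a n = hn a n / hn a (n - 1)"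

definition Rn :: "real \<Rightarrow> nat \<Rightarrow> real" where
  "Rn a n = 2 * exp (- (a^2)) * (poly (OP a n) a)^2 / hn a n"

definition rn :: "real \<Rightarrow> nat \<Rightarrow> real" where
  "rn a n = 2 * exp (- (a^2)) * poly (OP a n) a * poly (OP a (n - 1)) a / hn a (n - 1)"

definition An :: "real \<Rightarrow> nat \<Rightarrow> complex \<Rightarrow> complex" where
  "An a n z = 2 + complex_of_real (a * Rn a n) / (z^2 - (complex_of_real a)^2)"

definition Bn :: "real \<Rightarrow> nat \<Rightarrow> complex \<Rightarrow> complex" where
  "Bn a n z = z * complex_of_real (rn a n) / (z^2 - (complex_of_real a)^2)"

definition cpoly :: "real poly \<Rightarrow> complex \<Rightarrow> complex" where
  "cpoly p z = poly (map_poly complex_of_real p) z"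

end

theory Submission
  imports Defs "HOL-Probability.Probability" "HOL-Real_Asymp.Real_Asymp"
begin

(*
  For an even functional P_n has parity (-1)^n.

  Integration by parts on the two
  half-lines |x| >= a produces boundary terms at +-a:
    L(P_n' q) = 2 h_n q_{n-1} - e^{-a^2} (P_n(a) q(a) - P_n(-a) q(-a))   (deg q < n).
  Section 3 represents these boundary terms through the reproducing kernel, which
  gives P_n' = 2 beta_n P_{n-1} - c (K_n(.,a) - (-1)^n K_n(.,-a)); multiplying by
  x^2 - a^2 and using parity yields a polynomial identity, and the theorem follows by
  evaluating it at a complex z ~= +-a and dividing by z^2 - a^2.
*)

section \<open>Monic orthogonal polynomials of a positive definite functional\<close>

locale pos_def_functional =
  fixes L :: "real poly \<Rightarrow> real"
  assumes L_add: "L (p + q) = L p + L q"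
    and L_smult: "L (smult c p) = c * L p"
    and L_square_pos: "p \<noteq> 0 \<Longrightarrow> L (p * p) > 0"
begin

lemma L_zero [simp]: "L 0 = 0"
  using L_smult[of 0 0] by simp

lemma L_diff: "L (p - q) = L p - L q"
  using L_add[of "p - q" q] by simp

lemma L_mult_add_smult: "L (p * (r + smult c s)) = L (p * r) + c * L (p * s)"
  by (simp add: distrib_left L_add L_smult)

lemma L_sum: "L (\<Sum>k\<in>A. f k) = (\<Sum>k\<in>A. L (f k))"
  by (induction A rule: infinite_finite_induct) (simp_all add: L_add)

text \<open>A polynomial of degree \<open>< n\<close> orthogonal to all polynomials of degree \<open>< n\<close>
  vanishes (test it against itself).\<close>
lemma zero_if_orthogonal_to_lower:
  assumes "\<And>i. n \<le> i \<Longrightarrow> coeff E i = 0"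
    and "\<And>q. degree q < n \<Longrightarrow> L (E * q) = 0"
  shows "E = 0"
proof (rule ccontr)
  assume "E \<noteq> 0"
  then have "degree E < n"
    using assms(1) by (intro degree_lessI) auto
  then have "L (E * E) = 0" by (rule assms(2))
  with L_square_pos[OF \<open>E \<noteq> 0\<close>] show False by simp
qed

definition monic_orth :: "(nat \<Rightarrow> real poly) \<Rightarrow> bool" where
  "monic_orth P \<longleftrightarrow> (\<forall>n. degree (P n) = n \<and> lead_coeff (P n) = 1) \<and>
      (\<forall>j k. j \<noteq> k \<longrightarrow> L (P j * P k) = 0)"

end

lemma coeff_cancel_top:
  fixes q P :: "real poly"
  assumes "degree P = n" "lead_coeff P = 1" "degree q \<le> n" "n \<le> i"
  shows "coeff (q - smult (coeff q n) P) i = 0"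
  using assms by (cases "i = n") (auto simp: coeff_eq_0)

locale monic_orth_family = pos_def_functional +
  fixes P :: "nat \<Rightarrow> real poly"
  assumes monic_orth: "monic_orth P"
begin

definition sqnorm :: "nat \<Rightarrow> real" where
  "sqnorm n = L (P n * P n)"

lemma degree_P [simp]: "degree (P n) = n"
  and lead_coeff_P: "lead_coeff (P n) = 1"
  using monic_orth unfolding monic_orth_def by metis+

lemma coeff_P_top [simp]: "coeff (P n) n = 1"
  using lead_coeff_P[of n] by simp

lemma P_orth: "j \<noteq> k \<Longrightarrow> L (P j * P k) = 0"
  using monic_orth by (auto simp: monic_orth_def)

lemma P_nonzero [simp]: "P n \<noteq> 0"
  using lead_coeff_P[of n] by (metis leading_coeff_0_iff zero_neq_one)

lemma sqnorm_pos: "sqnorm n > 0"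
  unfolding sqnorm_def by (rule L_square_pos) simp

lemma P_0: "P 0 = 1"
  using degree_P[of 0] lead_coeff_P[of 0] degree_0_id[of "P 0"] by (simp add: one_pCons)

lemma coeff_cancel_P: "degree q \<le> n \<Longrightarrow> n \<le> i \<Longrightarrow> coeff (q - smult (coeff q n) (P n)) i = 0"
  by (rule coeff_cancel_top[OF degree_P lead_coeff_P])

lemma orth_lower: "degree q < n \<Longrightarrow> L (P n * q) = 0"
proof (induction "degree q" arbitrary: q rule: less_induct)
  case less
  define m where "m = degree q"
  define c where "c = coeff q m"
  define r where "r = q - smult c (P m)"
  have "L (P n * r) = 0"
  proof (cases "r = 0")
    case False
    have "coeff r k = 0" if "m \<le> k" for k
      unfolding r_def c_def by (rule coeff_cancel_P[OF eq_imp_le[OF m_def[symmetric]] that])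
    then have "degree r < m"
      using False by (intro degree_lessI) auto
    then show ?thesis using less m_def by simp
  qed simp
  moreover have "L (P n * P m) = 0"
    using P_orth less(2) m_def by simp
  moreover have "q = r + smult c (P m)"
    by (simp add: r_def)
  ultimately show ?case
    by (simp add: L_mult_add_smult)
qed

lemma orth_top:
  assumes "degree q \<le> n"
  shows "L (P n * q) = coeff q n * sqnorm n"
proof -
  define c where "c = coeff q n"
  define r where "r = q - smult c (P n)"
  have "L (P n * r) = 0"
  proof (cases "r = 0")
    case False
    have "coeff r k = 0" if "n \<le> k" for k
      unfolding r_def c_def by (rule coeff_cancel_P[OF assms that])
    then have "degree r < n"
      using False by (intro degree_lessI) auto
    then show ?thesis by (rule orth_lower)
  qed simp
  moreover have "q = r + smult c (P n)"
    by (simp add: r_def)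
  ultimately show ?thesis
    unfolding c_def[symmetric] by (simp add: L_mult_add_smult sqnorm_def)
qed

lemma orth_lower_imp_multiple:
  assumes "degree t \<le> m" and "\<And>u. degree u < m \<Longrightarrow> L (t * u) = 0"
  shows "t = smult (coeff t m) (P m)"
proof -
  have "t - smult (coeff t m) (P m) = 0"
  proof (rule zero_if_orthogonal_to_lower)
    show "coeff (t - smult (coeff t m) (P m)) i = 0" if "m \<le> i" for i
      by (rule coeff_cancel_P[OF assms(1) that])
    show "L ((t - smult (coeff t m) (P m)) * u) = 0" if "degree u < m" for u
      using assms(2)[OF that] orth_lower[OF that] by (simp add: left_diff_distrib L_diff L_smult)
  qed
  then show ?thesis by simp
qed

text \<open>The three-term recurrence \<open>P (n+1) = (x - b) P n - (h n / h (n-1)) P (n-1)\<close>: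
  \<open>x P n - P (n+1) - b P n\<close> has degree \<open>< n\<close> and is orthogonal to degrees \<open>< n - 1\<close>.\<close>
lemma three_term_recurrence:
  assumes "n \<ge> 1"
  obtains b where "P (Suc n) = [:-b, 1:] * P n - smult (sqnorm n / sqnorm (n - 1)) (P (n - 1))"
proof -
  define t where "t = pCons 0 (P n) - P (Suc n)"
  define b where "b = coeff t n"
  define t1 where "t1 = t - smult b (P n)"
  define g where "g = coeff t1 (n - 1)"
  have deg_t: "degree t \<le> n"
  proof (rule degree_le, intro allI impI)
    fix i assume "n < i"
    then obtain j where j: "i = Suc j" "n \<le> j"
      by (cases i) auto
    show "coeff t i = 0"
    proof (cases "j = n")
      case False
      then have "degree (P n) < j" "degree (P (Suc n)) < Suc j" using j by simp_all
      then show ?thesis using j by (simp add: t_def coeff_eq_0)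
    qed (simp add: t_def j)
  qed
  have "coeff t1 i = 0" if "n \<le> i" for i
    unfolding t1_def b_def by (rule coeff_cancel_P[OF deg_t that])
  then have deg_t1: "degree t1 \<le> n - 1"
    by (intro degree_le) auto
  have "L (t1 * u) = 0" if u: "degree u < n - 1" for u
  proof -
    have "degree (pCons 0 u) < n"
      using degree_pCons_le[of 0 u] u by simp
    then have "L (P n * pCons 0 u) = 0"
      by (rule orth_lower)
    moreover have "L (P (Suc n) * u) = 0" "L (P n * u) = 0"
      using u by (auto intro!: orth_lower)
    moreover have "t1 * u = P n * pCons 0 u - P (Suc n) * u - smult b (P n * u)"
      by (simp add: t1_def t_def algebra_simps)
    ultimately show ?thesis by (simp add: L_diff L_smult)
  qed
  then have t1: "t1 = smult g (P (n - 1))"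
    unfolding g_def by (rule orth_lower_imp_multiple[OF deg_t1])
  have "g * sqnorm (n - 1) = sqnorm n"
  proof -
    have "L (P (n - 1) * t1) = g * sqnorm (n - 1)"
      unfolding g_def by (rule orth_top[OF deg_t1])
    moreover have "P (n - 1) * t1 = P n * pCons 0 (P (n - 1)) - P (n - 1) * P (Suc n)
        - smult b (P (n - 1) * P n)"
      by (simp add: t1_def t_def algebra_simps)
    moreover have "L (P n * pCons 0 (P (n - 1))) = sqnorm n"
      using orth_top[of "pCons 0 (P (n - 1))" n] assms degree_pCons_le[of 0 "P (n - 1)"]
      by (cases n) auto
    moreover have "L (P (n - 1) * P (Suc n)) = 0" "L (P (n - 1) * P n) = 0"
      using assms by (auto intro!: P_orth)
    ultimately show ?thesis by (simp add: L_diff L_smult)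
  qed
  then have "g = sqnorm n / sqnorm (n - 1)"
    using sqnorm_pos[of "n - 1"] by (simp add: field_simps)
  moreover have "P (Suc n) = [:-b, 1:] * P n - t1"
    by (simp add: t1_def t_def algebra_simps)
  ultimately show ?thesis
    using t1 by (intro that) simp
qed

subsection \<open>The Christoffel-Darboux kernel\<close>

definition cd_numer :: "nat \<Rightarrow> real \<Rightarrow> real poly" where
  "cd_numer n y = smult (poly (P (n - 1)) y) (P n) - smult (poly (P n) y) (P (n - 1))"

text \<open>\<open>cd_numer n y\<close> vanishes at \<open>y\<close>, so it is divisible by \<open>x - y\<close>.\<close>
definition cd_kernel :: "nat \<Rightarrow> real \<Rightarrow> real poly" where
  "cd_kernel n y = cd_numer n y div [:-y, 1:]"

lemma cd_kernel_mult: "[:-y, 1:] * cd_kernel n y = cd_numer n y"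
proof -
  have "poly (cd_numer n y) y = 0" by (simp add: cd_numer_def)
  then have "[:-y, 1:] dvd cd_numer n y" by (simp add: poly_eq_0_iff_dvd)
  then show ?thesis unfolding cd_kernel_def by (rule dvd_mult_div_cancel)
qed

lemma poly_cd_kernel: "(x - y) * poly (cd_kernel n y) x = poly (cd_numer n y) x"
  using arg_cong[OF cd_kernel_mult[of y n], of "\<lambda>p. poly p x"] by (simp add: left_diff_distrib)

lemma coeff_cd_kernel:
  assumes "n \<le> i"
  shows "coeff (cd_kernel n y) i = 0"
proof (cases "cd_kernel n y = 0")
  case False
  have "degree (cd_numer n y) \<le> n" unfolding cd_numer_def
    by (rule order.trans[OF degree_diff_le_max]) (auto intro: order.trans[OF degree_smult_le])
  moreover have "degree (cd_numer n y) = 1 + degree (cd_kernel n y)"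
    unfolding cd_kernel_mult[symmetric] using False by (subst degree_mult_eq) simp_all
  ultimately show ?thesis using assms by (simp add: coeff_eq_0)
qed simp

lemma cd_kernel_one: "cd_kernel (Suc 0) y = 1"
proof -
  have P1: "poly (P (Suc 0)) x = coeff (P (Suc 0)) 0 + x" for x
    by (simp add: poly_altdef)
  have "[:-y, 1:] * cd_kernel (Suc 0) y = [:-y, 1:] * 1"
    unfolding cd_kernel_mult by (rule poly_ext) (simp add: cd_numer_def P_0 P1)
  then show ?thesis by (metis mult_left_cancel pCons_eq_0_iff zero_neq_one)
qed

text \<open>The recurrence of the kernel; it encodes \<open>K n x y = \<Sum>k<n. h (n-1) P k y P k x / h k\<close>.\<close>
lemma cd_kernel_Suc:
  assumes "n \<ge> 1"
  shows "cd_kernel (Suc n) y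
    = smult (poly (P n) y) (P n) + smult (sqnorm n / sqnorm (n - 1)) (cd_kernel n y)"
proof -
  obtain b where b: "P (Suc n) = [:-b, 1:] * P n - smult (sqnorm n / sqnorm (n - 1)) (P (n - 1))"
    using three_term_recurrence[OF assms] .
  let ?g = "sqnorm n / sqnorm (n - 1)"
  have "poly ([:-y, 1:] * cd_kernel (Suc n) y) x
      = poly ([:-y, 1:] * (smult (poly (P n) y) (P n) + smult ?g (cd_kernel n y))) x" for x
  proof -
    have "poly ([:-y, 1:] * cd_kernel (Suc n) y) x
        = (x - y) * poly (P n) y * poly (P n) x + ?g * poly (cd_numer n y) x"
      unfolding cd_kernel_mult by (simp add: cd_numer_def b algebra_simps)
    also have "\<dots> = poly ([:-y, 1:] * (smult (poly (P n) y) (P n) + smult ?g (cd_kernel n y))) x"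
      by (simp add: poly_cd_kernel[symmetric] algebra_simps)
    finally show ?thesis .
  qed
  then show ?thesis
    by (metis mult_left_cancel pCons_eq_0_iff poly_ext zero_neq_one)
qed

lemma L_cd_kernel: "n \<ge> 1 \<Longrightarrow> L (cd_kernel n y) = sqnorm (n - 1)"
proof (induction n rule: dec_induct)
  case base
  show ?case by (simp add: cd_kernel_one sqnorm_def P_0)
next
  case (step n)
  have "L (P n) = 0" using orth_lower[of 1 n] step by simp
  then show ?case
    using step sqnorm_pos[of "n - 1"] by (simp add: cd_kernel_Suc L_add L_smult)
qed

lemma cd_kernel_reproducing:
  assumes "n \<ge> 1" "degree q < n"
  shows "L (cd_kernel n y * q) = poly q y * sqnorm (n - 1)"
proof -
  define c where "c = poly q y"
  have "[:-y, 1:] dvd q - [:c:]"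
    using poly_eq_0_iff_dvd[of "q - [:c:]" y] by (simp add: c_def)
  then obtain s where s: "q - [:c:] = [:-y, 1:] * s"
    by (rule dvdE)
  then have q: "q = [:-y, 1:] * s + [:c:]"
    by (metis diff_add_cancel)
  have "L (cd_numer n y * s) = 0"
  proof (cases "s = 0")
    case False
    have "degree ([:-y, 1:] * s) < n"
      unfolding s[symmetric] using degree_diff_le_max[of q "[:c:]"] assms(2) by simp
    then have "degree s < n - 1"
      using False by (subst (asm) degree_mult_eq) auto
    then have "L (P n * s) = 0" "L (P (n - 1) * s) = 0"
      by (auto intro!: orth_lower)
    then show ?thesis
      by (simp add: cd_numer_def left_diff_distrib L_diff L_smult)
  qed simp
  moreover have "cd_kernel n y * q = cd_numer n y * s + smult c (cd_kernel n y)"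
    unfolding q by (simp add: cd_kernel_mult[symmetric] algebra_simps)
  ultimately show ?thesis
    using L_cd_kernel[OF assms(1)] by (simp add: L_add L_smult c_def)
qed

end

context pos_def_functional
begin

text \<open>A monic orthogonal family is unique: the difference of two \<open>n\<close>-th members
  has degree \<open>< n\<close> and is orthogonal to all lower degrees.\<close>
lemma monic_orth_unique:
  assumes P: "monic_orth P" and Q: "monic_orth Q"
  shows "P = Q"
proof
  interpret P: monic_orth_family L P
    using pos_def_functional_axioms P by (simp add: monic_orth_family_def monic_orth_family_axioms_def)
  interpret Q: monic_orth_family L Q
    using pos_def_functional_axioms Q by (simp add: monic_orth_family_def monic_orth_family_axioms_def)
  fix n
  have "P n - Q n = 0"
  proof (rule zero_if_orthogonal_to_lower)
    show "coeff (P n - Q n) i = 0" if "n \<le> i" for i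
      using that by (cases "i = n") (auto simp: coeff_eq_0)
    show "L ((P n - Q n) * q) = 0" if "degree q < n" for q
      using that by (simp add: left_diff_distrib L_diff P.orth_lower Q.orth_lower)
  qed
  then show "P n = Q n" by simp
qed

function gram_schmidt :: "nat \<Rightarrow> real poly" where
  "gram_schmidt n = monom 1 n - (\<Sum>k<n. smult (L (monom 1 n * gram_schmidt k)
      / L (gram_schmidt k * gram_schmidt k)) (gram_schmidt k))"
  by auto
termination by (relation "Wellfounded.measure id") auto

declare gram_schmidt.simps [simp del]

text \<open>Each Gram-Schmidt polynomial is monic of its index and orthogonal to all
  earlier ones; the subtracted projections have degree below the index.\<close>
lemma gram_schmidt_props:
  "degree (gram_schmidt n) = n \<and> lead_coeff (gram_schmidt n) = 1 \<and>
   (\<forall>k<n. L (gram_schmidt n * gram_schmidt k) = 0)"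
proof (induction n rule: less_induct)
  case (less n)
  let ?G = gram_schmidt
  let ?c = "\<lambda>k. L (monom 1 n * ?G k) / L (?G k * ?G k)"
  let ?S = "\<Sum>k<n. smult (?c k) (?G k)"
  have G_n: "?G n = monom 1 n - ?S"
    by (rule gram_schmidt.simps)
  have orth: "L (?G j * ?G k) = 0" if "j < n" "k < n" "j \<noteq> k" for j k
  proof (cases "k < j")
    case True
    then show ?thesis using less[of j] that by simp
  next
    case False
    then have "L (?G k * ?G j) = 0" using less[of k] that by simp
    then show ?thesis by (simp add: mult.commute)
  qed
  have deg_S: "degree ?S < n \<or> ?S = 0"
  proof (cases n)
    case (Suc m)
    have "degree ?S \<le> m"
      by (rule degree_sum_le) (use less Suc in \<open>auto intro: order.trans[OF degree_smult_le]\<close>)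
    then show ?thesis using Suc by simp
  qed simp
  have coeff_G: "coeff (?G n) i = (if i = n then 1 else 0)" if "n \<le> i" for i
    using deg_S that by (auto simp: G_n coeff_eq_0)
  have deg_G: "degree (?G n) = n"
    using coeff_G by (intro antisym degree_le le_degree) auto
  have "L (?G n * ?G j) = 0" if j: "j < n" for j
  proof -
    have pos: "L (?G j * ?G j) > 0"
      using less j by (intro L_square_pos) (metis leading_coeff_0_iff zero_neq_one)
    have "L (?S * ?G j) = (\<Sum>k<n. ?c k * L (?G k * ?G j))"
      by (simp add: sum_distrib_right L_sum L_smult)
    also have "\<dots> = ?c j * L (?G j * ?G j)"
      using j orth by (subst sum.remove[of _ j]) (auto intro!: sum.neutral)
    also have "\<dots> = L (monom 1 n * ?G j)"
      using pos by simp
    finally show ?thesis by (simp add: G_n left_diff_distrib L_diff)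
  qed
  then show ?case
    using deg_G coeff_G by simp
qed

lemma monic_orth_exists: "monic_orth gram_schmidt"
  unfolding monic_orth_def
proof (intro conjI allI impI)
  fix j k :: nat assume "j \<noteq> k"
  show "L (gram_schmidt j * gram_schmidt k) = 0"
  proof (cases "k < j")
    case True
    then show ?thesis using gram_schmidt_props[of j] by blast
  next
    case False
    then have "L (gram_schmidt k * gram_schmidt j) = 0"
      using gram_schmidt_props[of k] \<open>j \<noteq> k\<close> by auto
    then show ?thesis by (simp add: mult.commute)
  qed
qed (use gram_schmidt_props in blast)+

lemma monic_orth_The: "monic_orth (THE P. monic_orth P)"
  by (rule theI[of monic_orth, OF monic_orth_exists]) (erule monic_orth_unique[OF _ monic_orth_exists])

end

abbreviation reflect :: "real poly \<Rightarrow> real poly" where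
  "reflect p \<equiv> p \<circ>\<^sub>p [:0, -1:]"

locale even_monic_orth_family = monic_orth_family +
  assumes L_even: "L (reflect p) = L p"
begin

text \<open>\<open>P n (-x) = (-1)^n P n (x)\<close>: the reflected family, renormalised to be
  monic, is again monic orthogonal, hence equal to \<open>P\<close>.\<close>
lemma P_parity: "reflect (P n) = smult ((-1) ^ n) (P n)"
proof -
  define Q where "Q k = smult ((-1) ^ k) (reflect (P k))" for k
  have "monic_orth Q"
    unfolding monic_orth_def
  proof (intro conjI allI impI)
    fix k
    show "degree (Q k) = k" by (simp add: Q_def degree_pcompose)
    have "lead_coeff (reflect (P k)) = (-1) ^ k"
      using lead_coeff_comp[of "[:0, -1:]" "P k"] lead_coeff_P[of k] by simp
    then show "lead_coeff (Q k) = 1"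
      by (simp add: Q_def degree_pcompose power_mult_distrib[symmetric])
  next
    fix j k :: nat assume "j \<noteq> k"
    have "Q j * Q k = smult ((-1) ^ j * (-1) ^ k) (reflect (P j * P k))"
      by (simp add: Q_def pcompose_mult mult_ac)
    then show "L (Q j * Q k) = 0"
      using P_orth[OF \<open>j \<noteq> k\<close>] by (simp add: L_smult L_even)
  qed
  then have "Q = P" using monic_orth monic_orth_unique by blast
  then have "smult ((-1) ^ n) (Q n) = smult ((-1) ^ n) (P n)" by simp
  then show ?thesis by (simp add: Q_def power_mult_distrib[symmetric])
qed

lemma poly_P_neg: "poly (P n) (-x) = (-1) ^ n * poly (P n) x"
  using arg_cong[OF P_parity[of n], of "\<lambda>p. poly p x"] by (simp add: poly_pcompose)

text \<open>The kernel combination \<open>K n x y - (-1)^n K n x (-y)\<close>, multiplied by \<open>x\<^sup>2 - y\<^sup>2\<close>,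
  collapses to two terms; this produces the \<open>P_{n-1}\<close> and \<open>x P_n\<close> terms of the ladder
  operator.\<close>
lemma cd_kernel_even_combination:
  assumes "n \<ge> 1"
  shows "(x^2 - y^2) * (poly (cd_kernel n y) x - (-1) ^ n * poly (cd_kernel n (-y)) x)
    = 2 * poly (P (n - 1)) y * x * poly (P n) x - 2 * y * poly (P n) y * poly (P (n - 1)) x"
proof -
  obtain m where n: "n = Suc m"
    using assms by (cases n) auto
  define s :: real where "s = (-1) ^ n"
  define A where "A = poly (P n) x"
  define B where "B = poly (P m) x"
  define p where "p = poly (P n) y"
  define q where "q = poly (P m) y"
  define K where "K = poly (cd_kernel n y) x"
  define K' where "K' = poly (cd_kernel n (-y)) x"
  have s2: "s * s = 1"
    by (simp add: s_def flip: power_add)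
  have F1: "(x - y) * K = q * A - p * B"
    unfolding K_def poly_cd_kernel by (simp add: cd_numer_def n A_def B_def p_def q_def)
  have "poly (P n) (-y) = s * p" "poly (P m) (-y) = - s * q"
    by (simp_all add: poly_P_neg s_def p_def q_def n)
  then have F2: "(x + y) * K' = - s * q * A - s * p * B"
    using poly_cd_kernel[of x "-y" n] by (simp add: K'_def cd_numer_def n A_def B_def)
  have "(x^2 - y^2) * (K - s * K') = (x + y) * ((x - y) * K) - s * (x - y) * ((x + y) * K')"
    by (simp add: algebra_simps power2_eq_square)
  also have "\<dots> = (x + y) * (q * A - p * B) + (s * s) * (x - y) * (q * A + p * B)"
    unfolding F1 F2 by (simp add: algebra_simps)
  also have "\<dots> = 2 * q * x * A - 2 * y * p * B"
    unfolding s2 by (simp add: algebra_simps)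
  finally show ?thesis
    by (simp add: n s_def A_def B_def p_def q_def K_def K'_def)
qed

end

section \<open>The weight \<open>exp(-x\<^sup>2)\<close> on \<open>|x| \<ge> a\<close>\<close>

text \<open>Moments of \<open>e^{-x\<^sup>2}\<close> are finite, being rescaled Gaussian moments.\<close>
lemma gauss_moment_integrable: "integrable lborel (\<lambda>x::real. x ^ k * exp (- (x^2)))"
proof -
  let ?s = "sqrt (1/2) :: real"
  have "integrable lborel (\<lambda>x. sqrt pi * (normal_density 0 ?s x * (x - 0) ^ k))"
    by (intro integrable_mult_right integrable_normal_moment) simp
  moreover have "sqrt pi * normal_density 0 ?s x = exp (- (x^2))" for x
    by (simp add: normal_density_def real_sqrt_mult)
  then have "(\<lambda>x. sqrt pi * (normal_density 0 ?s x * (x - 0) ^ k)) = (\<lambda>x. x ^ k * exp (- (x^2)))"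
    by (auto simp: fun_eq_iff mult.assoc[symmetric] mult.commute)
  ultimately show ?thesis by metis
qed

lemma gauss_poly_integrable: "integrable lborel (\<lambda>x::real. poly p x * exp (- (x^2)))"
proof -
  have "integrable lborel (\<lambda>x. \<Sum>i\<le>degree p. coeff p i * (x ^ i * exp (- (x^2))))"
    by (intro Bochner_Integration.integrable_sum integrable_mult_right gauss_moment_integrable)
  then show ?thesis by (simp add: poly_altdef sum_distrib_right mult.assoc)
qed

lemma gauss_poly_tendsto_0: "((\<lambda>x::real. poly p x * exp (- (x^2))) \<longlongrightarrow> 0) at_top"
proof -
  have "((\<lambda>x::real. \<Sum>i\<le>degree p. coeff p i * (x ^ i * exp (- (x^2))))
      \<longlongrightarrow> (\<Sum>i\<le>degree p. coeff p i * 0)) at_top"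
    by (intro tendsto_sum tendsto_mult tendsto_const) real_asymp
  then show ?thesis by (simp add: poly_altdef sum_distrib_right mult.assoc)
qed

lemma gauss_half_line_integrable:
  "integrable lborel (\<lambda>x::real. indicator {b<..} x * (poly p x * exp (- (x^2))))"
  using integrable_mult_indicator[OF _ gauss_poly_integrable, of "{b<..}" p] by simp

lemma gauss_half_line_ftc:
  fixes f :: "real poly"
  shows "(LINT x|lborel. indicator {b<..} x * (poly (pderiv f - [:0, 2:] * f) x * exp (- (x^2))))
     = - poly f b * exp (- (b^2))"
proof -
  let ?F = "\<lambda>x. poly f x * exp (- (x^2))"
  let ?g = "\<lambda>x. poly (pderiv f - [:0, 2:] * f) x * exp (- (x^2))"
  have "(LBINT x=ereal b..\<infinity>. ?g x) = 0 - ?F b"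
  proof (rule interval_integral_FTC_integrable)
    show "(?F has_vector_derivative ?g x) (at x)" for x
      unfolding has_real_derivative_iff_has_vector_derivative[symmetric]
      by (auto intro!: derivative_eq_intros poly_DERIV simp: algebra_simps power2_eq_square)
    show "isCont ?g x" for x by (intro continuous_intros)
    show "set_integrable lborel (einterval (ereal b) \<infinity>) ?g"
      using gauss_half_line_integrable[of b "pderiv f - [:0, 2:] * f"]
      by (simp add: set_integrable_def)
    show "((?F \<circ> real_of_ereal) \<longlongrightarrow> ?F b) (at_right (ereal b))"
      unfolding ereal_tendsto_simps1
      by (intro tendsto_within_subset[OF isCont_def[THEN iffD1]]) (auto intro!: continuous_intros)
    show "((?F \<circ> real_of_ereal) \<longlongrightarrow> 0) (at_left \<infinity>)"
      unfolding ereal_tendsto_simps1 by (rule gauss_poly_tendsto_0)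
  qed simp
  then show ?thesis
    by (simp add: interval_integral_to_infinity_eq set_lebesgue_integral_def)
qed

definition Lw :: "real \<Rightarrow> real poly \<Rightarrow> real" where
  "Lw a p = (LINT x|lborel. poly p x * wgt a x)"

lemma poly_measurable [measurable]: "poly (p :: real poly) \<in> borel_measurable borel"
  by (intro borel_measurable_continuous_onI continuous_on_poly continuous_on_id)

lemma wgt_measurable [measurable]: "wgt a \<in> borel_measurable borel"
  unfolding wgt_def by measurable

lemma Lw_integrable: "integrable lborel (\<lambda>x. poly p x * wgt a x)"
proof -
  have "integrable lborel (\<lambda>x. indicator {x. a \<le> \<bar>x\<bar>} x *\<^sub>R (poly p x * exp (- (x^2))))"
    by (rule integrable_mult_indicator) (auto intro: gauss_poly_integrable)
  moreover have "(\<lambda>x. indicator {x. a \<le> \<bar>x\<bar>} x *\<^sub>R (poly p x * exp (- (x^2))))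
      = (\<lambda>x. poly p x * wgt a x)"
    by (auto simp: fun_eq_iff wgt_def indicator_def)
  ultimately show ?thesis by simp
qed

text \<open>Positivity: \<open>p\<^sup>2 w\<close> is nonnegative and strictly positive on an interval
  \<open>[c, c+1]\<close> beyond \<open>a\<close> and all roots of \<open>p\<close>, which has positive measure.\<close>
lemma Lw_square_pos:
  assumes "p \<noteq> 0"
  shows "Lw a (p * p) > 0"
proof -
  define S where "S = insert a {x. poly p x = 0}"
  define c where "c = Max S + 1"
  have fin: "finite S"
    using poly_roots_finite[OF assms] by (simp add: S_def)
  have pos: "poly (p * p) x * wgt a x > 0" if "c \<le> x" for x
  proof -
    have "a < x"
      using Max_ge[OF fin, of a] that by (simp add: S_def c_def)
    moreover have "poly p x \<noteq> 0"
    proof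
      assume "poly p x = 0"
      then have "x \<le> Max S" using Max_ge[OF fin, of x] by (simp add: S_def)
      with that show False by (simp add: c_def)
    qed
    ultimately show ?thesis
      by (auto simp: wgt_def simp flip: power2_eq_square)
  qed
  have nonneg: "poly (p * p) x * wgt a x \<ge> 0" for x
    by (simp add: wgt_def)
  have "Lw a (p * p) \<noteq> 0"
  proof
    assume "Lw a (p * p) = 0"
    then have "AE x in lborel. poly (p * p) x * wgt a x = 0"
      using integral_nonneg_eq_0_iff_AE[OF Lw_integrable[of "p * p" a] AE_I2[OF nonneg]]
      by (simp add: Lw_def)
    then have "AE x in lborel. x \<notin> {c..c + 1}"
      by eventually_elim (use pos in force)
    then have "emeasure lborel {c..c + 1} = 0"
      by (subst (asm) AE_iff_measurable[of "{c..c + 1}"]) auto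
    then show False by simp
  qed
  moreover have "Lw a (p * p) \<ge> 0"
    unfolding Lw_def using nonneg by (intro integral_nonneg_AE) auto
  ultimately show ?thesis by simp
qed

text \<open>The weight is even, so the functional is invariant under \<open>x \<mapsto> -x\<close>.\<close>
lemma Lw_even: "Lw a (reflect p) = Lw a p"
proof -
  have "Lw a p = \<bar>-1\<bar> *\<^sub>R (LINT x|lborel. poly p (0 + -1 * x) * wgt a (0 + -1 * x))"
    unfolding Lw_def by (rule lborel_integral_real_affine) simp
  moreover have "wgt a (- x) = wgt a x" for x
    by (simp add: wgt_def)
  ultimately show ?thesis
    by (simp add: Lw_def poly_pcompose)
qed

interpretation Lw: pos_def_functional "Lw a" for a
proof
  show "Lw a (p + q) = Lw a p + Lw a q" for p q
    by (simp add: Lw_def Lw_integrable distrib_right)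
  show "Lw a (smult c p) = c * Lw a p" for c p
    by (simp add: Lw_def mult.assoc)
  show "p \<noteq> 0 \<Longrightarrow> Lw a (p * p) > 0" for p
    by (rule Lw_square_pos)
qed

lemma OP_eq_The: "OP a = (THE P. Lw.monic_orth a P)"
  unfolding OP_def Lw.monic_orth_def Lw_def by (simp add: mult_ac)

interpretation OP: even_monic_orth_family "Lw a" "OP a" for a
  by unfold_locales (simp_all add: OP_eq_The Lw.monic_orth_The Lw_even)

lemma sqnorm_OP [simp]: "OP.sqnorm a = hn a"
  by (simp add: fun_eq_iff OP.sqnorm_def hn_def Lw_def power2_eq_square)

lemma hn_pos: "hn a n > 0"
  using OP.sqnorm_pos[of a n] by simp

subsection \<open>Integration by parts\<close>

lemma Lw_split:
  assumes "a > 0"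
  shows "Lw a p = (LINT x|lborel. indicator {a<..} x * (poly p x * exp (- (x^2))))
                + (LINT x|lborel. indicator {a<..} x * (poly (reflect p) x * exp (- (x^2))))"
proof -
  let ?h = "\<lambda>p x. indicator {a<..} x * (poly p x * exp (- (x^2)))"
  have "Lw a p = (LINT x|lborel. ?h p x + ?h (reflect p) (0 + -1 * x))"
    unfolding Lw_def
  proof (rule integral_cong_AE)
    have "AE x in lborel. x \<noteq> a" "AE x in lborel. x \<noteq> -a"
      by (rule AE_lborel_singleton)+
    then show "AE x in lborel. poly p x * wgt a x = ?h p x + ?h (reflect p) (0 + -1 * x)"
      by eventually_elim (use assms in \<open>auto simp: wgt_def indicator_def poly_pcompose\<close>)
  qed (simp_all add: poly_pcompose)
  also have "\<dots> = (LINT x|lborel. ?h p x) + (LINT x|lborel. ?h (reflect p) (0 + -1 * x))"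
    using gauss_half_line_integrable[of a "reflect p"]
    by (intro Bochner_Integration.integral_add gauss_half_line_integrable
        lborel_integrable_real_affine) simp_all
  also have "(LINT x|lborel. ?h (reflect p) (0 + -1 * x)) = (LINT x|lborel. ?h (reflect p) x)"
    using lborel_integral_real_affine[of "-1" "?h (reflect p)" 0] by simp
  finally show ?thesis .
qed

text \<open>Since \<open>(f e^{-x\<^sup>2})' = (f' - 2x f) e^{-x\<^sup>2}\<close>, integrating over \<open>|x| \<ge> a\<close> leaves
  only the boundary terms at \<open>\<plusminus>a\<close>.\<close>
lemma Lw_ibp:
  fixes f :: "real poly"
  assumes "a > 0"
  shows "Lw a (pderiv f - [:0, 2:] * f) = - exp (- (a^2)) * (poly f a - poly f (-a))"
proof -
  let ?g = "\<lambda>p x. indicator {a<..} x * (poly (pderiv p - [:0, 2:] * p) x * exp (- (x^2)))"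
  have reflect_eq: "reflect (pderiv f - [:0, 2:] * f) = - (pderiv (reflect f) - [:0, 2:] * reflect f)"
    by (rule poly_ext) (simp add: pderiv_pcompose poly_pcompose pderiv_pCons algebra_simps)
  have "(LINT x|lborel. indicator {a<..} x * (poly (reflect (pderiv f - [:0, 2:] * f)) x
      * exp (- (x^2)))) = (LINT x|lborel. - ?g (reflect f) x)"
    unfolding reflect_eq by (intro Bochner_Integration.integral_cong) (simp_all add: algebra_simps)
  also have "\<dots> = poly f (-a) * exp (- (a^2))"
    using gauss_half_line_ftc[where f = "reflect f" and b = a] by (simp add: poly_pcompose)
  finally show ?thesis
    unfolding Lw_split[OF assms] gauss_half_line_ftc by (simp add: algebra_simps)
qed

lemma Lw_pderiv_OP:
  assumes "a > 0" "n \<ge> 1" "degree q < n"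
  shows "Lw a (pderiv (OP a n) * q) = 2 * coeff q (n - 1) * hn a n
     - exp (- (a^2)) * (poly (OP a n) a * poly q a - poly (OP a n) (-a) * poly q (-a))"
proof -
  let ?P = "OP a n"
  have prod_rule: "pderiv (?P * q) - [:0, 2:] * (?P * q)
      = pderiv ?P * q + ?P * pderiv q - smult 2 (?P * pCons 0 q)"
    by (simp add: pderiv_mult algebra_simps)
  have "Lw a (pderiv ?P * q)
      = Lw a (pderiv (?P * q) - [:0, 2:] * (?P * q)) - Lw a (?P * pderiv q) + 2 * Lw a (?P * pCons 0 q)"
    unfolding prod_rule Lw.L_add Lw.L_diff Lw.L_smult by simp
  moreover have "Lw a (?P * pderiv q) = 0"
    using assms by (intro OP.orth_lower) (simp add: degree_pderiv)
  moreover have "Lw a (?P * pCons 0 q) = coeff q (n - 1) * hn a n"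
    using assms OP.orth_top[where a = a and q = "pCons 0 q" and n = n] degree_pCons_le[of 0 q]
    by (cases n) auto
  ultimately show ?thesis
    unfolding Lw_ibp[OF assms(1)] by (simp add: algebra_simps)
qed

section \<open>The ladder operator\<close>

text \<open>The boundary terms of \<open>Lw_pderiv_OP\<close> are reproduced by the kernel, which
  determines \<open>P_n'\<close> completely.\<close>
lemma pderiv_OP_kernel_expansion:
  assumes "a > 0" "n \<ge> 1"
  shows "pderiv (OP a n) = smult (2 * beta a n) (OP a (n - 1))
    - smult (exp (- (a^2)) * poly (OP a n) a / hn a (n - 1))
        (OP.cd_kernel a n a - smult ((-1) ^ n) (OP.cd_kernel a n (-a)))"
  (is "_ = ?rhs")
proof -
  define c where "c = exp (- (a^2)) * poly (OP a n) a / hn a (n - 1)"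
  define s :: real where "s = (-1) ^ n"
  let ?K = "OP.cd_kernel a n"
  have "pderiv (OP a n) - ?rhs = 0"
  proof (rule Lw.zero_if_orthogonal_to_lower)
    show "coeff (pderiv (OP a n) - ?rhs) i = 0" if "n \<le> i" for i
      using that assms by (simp add: coeff_eq_0 degree_pderiv OP.coeff_cd_kernel)
    show "Lw a ((pderiv (OP a n) - ?rhs) * q) = 0" if q: "degree q < n" for q
    proof -
      have "(pderiv (OP a n) - ?rhs) * q = pderiv (OP a n) * q
          - smult (2 * beta a n) (OP a (n - 1) * q) + smult c (?K a * q) - smult (c * s) (?K (-a) * q)"
        by (simp add: c_def s_def algebra_simps smult_diff_right)
      then have "Lw a ((pderiv (OP a n) - ?rhs) * q) = Lw a (pderiv (OP a n) * q)
          - 2 * beta a n * Lw a (OP a (n - 1) * q) + c * Lw a (?K a * q) - c * s * Lw a (?K (-a) * q)"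
        by (simp only: Lw.L_add Lw.L_diff Lw.L_smult)
      also have "\<dots> = 0"
      proof -
        have "Lw a (OP a (n - 1) * q) = coeff q (n - 1) * hn a (n - 1)"
          using OP.orth_top[where a = a and q = q and n = "n - 1"] q by simp
        moreover have "poly (OP a n) (-a) = s * poly (OP a n) a"
          by (simp add: s_def OP.poly_P_neg)
        ultimately show ?thesis
          unfolding Lw_pderiv_OP[OF assms q] OP.cd_kernel_reproducing[OF assms(2) q]
          using hn_pos[of a "n - 1"] by (simp add: c_def beta_def field_simps)
      qed
      finally show ?thesis .
    qed
  qed
  then show ?thesis by simp
qed

lemma ladder_identity:
  assumes "a > 0" "n \<ge> 1"
  shows "[:-(a^2), 0, 1:] * pderiv (OP a n)
    = smult (beta a n) ([:a * Rn a n - 2 * a^2, 0, 2:] * OP a (n - 1)) - [:0, rn a n:] * OP a n"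
proof (rule poly_ext)
  fix x
  define c where "c = exp (- (a^2)) * poly (OP a n) a / hn a (n - 1)"
  have h: "hn a n > 0" "hn a (n - 1) > 0" by (rule hn_pos)+
  have "poly ([:-(a^2), 0, 1:] * pderiv (OP a n)) x
      = 2 * beta a n * (x^2 - a^2) * poly (OP a (n - 1)) x
        - c * ((x^2 - a^2) * (poly (OP.cd_kernel a n a) x - (-1) ^ n * poly (OP.cd_kernel a n (-a)) x))"
    unfolding pderiv_OP_kernel_expansion[OF assms] c_def by (simp add: algebra_simps power2_eq_square)
  also have "\<dots> = poly (smult (beta a n) ([:a * Rn a n - 2 * a^2, 0, 2:] * OP a (n - 1))
      - [:0, rn a n:] * OP a n) x"
    unfolding OP.cd_kernel_even_combination[OF assms(2)] using h
    by (simp add: c_def beta_def Rn_def rn_def field_simps power2_eq_square)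
  finally show "poly ([:-(a^2), 0, 1:] * pderiv (OP a n)) x = \<dots>" .
qed

lemma cpoly_0: "cpoly 0 z = 0"
  by (simp add: cpoly_def)

lemma cpoly_pCons: "cpoly (pCons c p) z = of_real c + z * cpoly p z"
  by (simp add: cpoly_def map_poly_pCons)

lemma cpoly_add: "cpoly (p + q) z = cpoly p z + cpoly q z"
proof -
  have "map_poly complex_of_real (p + q) = map_poly of_real p + map_poly of_real q"
    by (rule poly_eqI) (simp add: coeff_map_poly)
  then show ?thesis by (simp add: cpoly_def)
qed

lemma cpoly_smult: "cpoly (smult c p) z = of_real c * cpoly p z"
  by (simp add: cpoly_def map_poly_smult)

lemma cpoly_diff: "cpoly (p - q) z = cpoly p z - cpoly q z"
  using cpoly_add[of "p - q" q z] by simp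

lemma cpoly_mult: "cpoly (p * q) z = cpoly p z * cpoly q z"
  by (induction p) (simp_all add: cpoly_0 cpoly_add cpoly_smult cpoly_pCons algebra_simps)

theorem mainTheorem1:
  fixes a :: real and n :: nat and z :: complex
  assumes "a > 0" and "n \<ge> 1"
    and "z \<noteq> complex_of_real a" and "z \<noteq> - complex_of_real a"
  shows "cpoly (pderiv (OP a n)) z
     = complex_of_real (beta a n) * An a n z * cpoly (OP a (n - 1)) z
       - Bn a n z * cpoly (OP a n) z"
proof -
  define w where "w = z^2 - (complex_of_real a)^2"
  have "w \<noteq> 0"
    using assms(3,4) by (auto simp: w_def power2_eq_square square_eq_iff)
  have "cpoly [:-(a^2), 0, 1:] z * cpoly (pderiv (OP a n)) z
      = of_real (beta a n) * (cpoly [:a * Rn a n - 2 * a^2, 0, 2:] z * cpoly (OP a (n - 1)) z)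
        - cpoly [:0, rn a n:] z * cpoly (OP a n) z"
    using arg_cong[OF ladder_identity[OF assms(1,2)], of "\<lambda>p. cpoly p z"]
    by (simp only: cpoly_mult cpoly_diff cpoly_smult)
  moreover have "cpoly [:-(a^2), 0, 1:] z = w"
    "cpoly [:a * Rn a n - 2 * a^2, 0, 2:] z = 2 * w + of_real (a * Rn a n)"
    "cpoly [:0, rn a n:] z = of_real (rn a n) * z"
    by (simp_all add: cpoly_0 cpoly_pCons w_def algebra_simps power2_eq_square)
  ultimately have D_eq: "cpoly (pderiv (OP a n)) z
      = (of_real (beta a n) * (2 * w + of_real (a * Rn a n)) * cpoly (OP a (n - 1)) z
        - of_real (rn a n) * z * cpoly (OP a n) z) / w"
    using \<open>w \<noteq> 0\<close> by (simp add: eq_divide_eq mult.assoc mult.commute)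
  show ?thesis
    unfolding D_eq An_def Bn_def w_def[symmetric] using \<open>w \<noteq> 0\<close> by (simp add: field_simps)
qed

end
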